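(* Let $(\mathcal{H}, p_0, \mathcal{Z}, T, \mathcal{Y}, O)$ be a learning POMDP, let $h^* \in \mathcal{H}$ be a target hypothesis, let $0<\lambda\le 1$ be a teaching performance and let $t^*\in\mathbb{N}_{\ge 1}$ be a pre-set number of trials. Suppose there exist polynomials $B_z\in\mathcal{R}[t,b]$, $z\in\mathcal{Z}$, of degree $d$, sum-of-squares polynomials $p^f_z\in\Sigma[b]$, $z\in\mathcal{Z}$, and constants $s^1_z,s^2_z>0$, $z\in\mathcal{Z}$, such that for every $z\in\mathcal{Z}$: (i) $B_z(t^*,b)+p^f_z(b)\big(b(h^* )-\lambda\big)-s^1_z\in\Sigma[b]$; (ii) $-B_z(0,p_0)-s^2_z>0$; (iii) for all $t\in\{1,\dots,t^*\}$ and $y\in\mathcal{Y}$: $$-R_z(b,y)^d\Big(B_z\Big(t,\tfrac{S_z(b,y)}{R_z(b,y)}\Big)-B_z(t-1,b)\Big)\in\Sigma[t,b].$$ Then there exists no solution of the belief dynamics $b_t=f_{z}(b_{t-1},y_t)$ (with arbitrary examples $z\in\mathcal{Z}$ and observations $y_t\in\mathcal{Y}$) with $b_0=p_0$ and $b_{t^*}\in\mathcal{B}_f$, where $\mathcal{B}_f=\{b\in\mathcal{B}: b(h^* )<\lambda\}$; hence the teaching performance is satisfied.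
   Context: A learning POMDP is a tuple $(\mathcal{H}, p_0, \mathcal{Z}, T, \mathcal{Y}, O)$ where $\mathcal{H}$ is a finite set of hypotheses, $\mathcal{Z}$ a finite set of examples (actions), $\mathcal{Y}$ a finite set of observations, $p_0$ an initial distribution on $\mathcal{H}$, $T(h,z,h')\in[0,1]$ transition probabilities and $O(y\mid h',z)\in[0,1]$ observation probabilities. $\mathcal{B}$ is the unit simplex of beliefs on $\mathcal{H}$; $b=(b(h))_{h\in\mathcal{H}}$ are treated as real variables. The belief update $f_z(b,y)$ is the rational map with components $f_z^{h'}(b,y)=S_z^{h'}(b,y)/R_z(b,y)$, where $S_z^{h'}(b,y)=O(y\mid h',z)\sum_{h\in\mathcal{H}}T(h,z,h')b(h)$ and $R_z(b,y)=\sum_{h''\in\mathcal{H}}O(y\mid h'',z)\sum_{h\in\mathcal{H}}T(h,z,h'')b(h)$; $S_z/R_z$ denotes the vector with these components. $\mathcal{R}[x]$ denotes real polynomials in the variables $x$, and $\Sigma[x]\subset\mathcal{R}[x]$ the polynomials that are sums of squares of polynomials. *)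

theory Defs
  imports Complex_Main
begin

text \<open>Real multivariate polynomial functions over a variable type 'v, with a total-degree bound.
  (Over the infinite field of reals, polynomial functions and polynomials correspond bijectively.)\<close>
inductive mpoly_deg :: "nat \<Rightarrow> (('v \<Rightarrow> real) \<Rightarrow> real) \<Rightarrow> bool" where
  const: "mpoly_deg n (\<lambda>x. c)"
| var: "1 \<le> n \<Longrightarrow> mpoly_deg n (\<lambda>x. x v)"
| add: "mpoly_deg n f \<Longrightarrow> mpoly_deg n g \<Longrightarrow> mpoly_deg n (\<lambda>x. f x + g x)"
| mult: "mpoly_deg m f \<Longrightarrow> mpoly_deg k g \<Longrightarrow> mpoly_deg (m + k) (\<lambda>x. f x * g x)"
| mono: "mpoly_deg m f \<Longrightarrow> m \<le> n \<Longrightarrow> mpoly_deg n f"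

definition is_mpoly :: "(('v \<Rightarrow> real) \<Rightarrow> real) \<Rightarrow> bool" where
  "is_mpoly f \<longleftrightarrow> (\<exists>n. mpoly_deg n f)"

definition mpoly_degree :: "(('v \<Rightarrow> real) \<Rightarrow> real) \<Rightarrow> nat" where
  "mpoly_degree f = (LEAST n. mpoly_deg n f)"

definition sos :: "(('v \<Rightarrow> real) \<Rightarrow> real) \<Rightarrow> bool" where
  "sos f \<longleftrightarrow> (\<exists>gs. (\<forall>g\<in>set gs. is_mpoly g) \<and> f = (\<lambda>x. \<Sum>g\<leftarrow>gs. (g x)\<^sup>2))"

text \<open>Polynomials in (t, b): the variable None stands for t, Some h for b(h).\<close>
definition tb_fun :: "(real \<Rightarrow> ('h \<Rightarrow> real) \<Rightarrow> real) \<Rightarrow> (('h option \<Rightarrow> real) \<Rightarrow> real)" where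
  "tb_fun B = (\<lambda>x. B (x None) (\<lambda>h. x (Some h)))"

definition simplex :: "('h::finite \<Rightarrow> real) set" where
  "simplex = {b. (\<forall>h. 0 \<le> b h) \<and> (\<Sum>h\<in>UNIV. b h) = 1}"

definition Bf :: "'h::finite \<Rightarrow> real \<Rightarrow> ('h \<Rightarrow> real) set" where
  "Bf hstar lam = {b \<in> simplex. b hstar < lam}"

text \<open>Belief update. T h z h' = T(h,z,h'), Ob y h' z = O(y | h', z).\<close>
definition Supd :: "('h::finite \<Rightarrow> 'z \<Rightarrow> 'h \<Rightarrow> real) \<Rightarrow> ('y \<Rightarrow> 'h \<Rightarrow> 'z \<Rightarrow> real)
    \<Rightarrow> 'z \<Rightarrow> ('h \<Rightarrow> real) \<Rightarrow> 'y \<Rightarrow> 'h \<Rightarrow> real" where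
  "Supd T Ob z b y h' = Ob y h' z * (\<Sum>h\<in>UNIV. T h z h' * b h)"

definition Rupd :: "('h::finite \<Rightarrow> 'z \<Rightarrow> 'h \<Rightarrow> real) \<Rightarrow> ('y \<Rightarrow> 'h \<Rightarrow> 'z \<Rightarrow> real)
    \<Rightarrow> 'z \<Rightarrow> ('h \<Rightarrow> real) \<Rightarrow> 'y \<Rightarrow> real" where
  "Rupd T Ob z b y = (\<Sum>h''\<in>UNIV. Supd T Ob z b y h'')"

definition fupd :: "('h::finite \<Rightarrow> 'z \<Rightarrow> 'h \<Rightarrow> real) \<Rightarrow> ('y \<Rightarrow> 'h \<Rightarrow> 'z \<Rightarrow> real)
    \<Rightarrow> 'z \<Rightarrow> ('h \<Rightarrow> real) \<Rightarrow> 'y \<Rightarrow> ('h \<Rightarrow> real)" where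
  "fupd T Ob z b y = (\<lambda>h'. Supd T Ob z b y h' / Rupd T Ob z b y)"

end

theory Submission
  imports Defs
begin

text \<open>A barrier-certificate argument. Multiplying condition (iii) by \<open>R_z(b,y)^d > 0\<close> shows that
  \<open>B_z(t, b_t)\<close> is nonincreasing along any trajectory, so by (ii) it stays below \<open>-s\<^sup>2_z < 0\<close>;
  by (i), \<open>B_z(t\<^sup>*, b)\<close> is at least \<open>s\<^sup>1_z > 0\<close> on \<open>B_f\<close>. Sums of squares are only used through
  their pointwise nonnegativity and of \<open>T\<close>, \<open>O\<close> only nonnegativity is used.
  Where \<open>R_z = 0\<close> the update is the junk value \<open>0\<close> (division by zero); the zero vector is
  absorbing and lies outside the simplex, so such trajectories never reach \<open>B_f\<close>.\<close>

lemma sos_nonneg: "sos f \<Longrightarrow> 0 \<le> f x"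
  unfolding sos_def by (auto intro!: sum_list_nonneg)

lemma Supd_nonneg:
  assumes "\<And>h h'. 0 \<le> T h z h'" and "\<And>h'. 0 \<le> Ob y h' z" and "\<And>h. 0 \<le> b h"
  shows "0 \<le> Supd T Ob z b y h'"
  unfolding Supd_def using assms by (intro mult_nonneg_nonneg sum_nonneg) auto

lemma Rupd_nonneg:
  assumes "\<And>h h'. 0 \<le> T h z h'" and "\<And>h'. 0 \<le> Ob y h' z" and "\<And>h. 0 \<le> b h"
  shows "0 \<le> Rupd T Ob z b y"
  unfolding Rupd_def by (intro sum_nonneg Supd_nonneg assms)

lemma fupd_nonneg:
  assumes "\<And>h h'. 0 \<le> T h z h'" and "\<And>h'. 0 \<le> Ob y h' z" and "\<And>h. 0 \<le> b h"
  shows "0 \<le> fupd T Ob z b y h'"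
  unfolding fupd_def by (intro divide_nonneg_nonneg Supd_nonneg Rupd_nonneg assms)

lemma Rupd_zero_belief: "Rupd T Ob z (\<lambda>_. 0) y = 0"
  unfolding Rupd_def Supd_def by simp

lemma fupd_eq_zero_if_Rupd_zero: "Rupd T Ob z b y = 0 \<Longrightarrow> fupd T Ob z b y = (\<lambda>_. 0)"
  unfolding fupd_def by simp

lemma zero_notin_simplex: "(\<lambda>_. 0) \<notin> simplex"
  unfolding simplex_def by simp

lemma sos_certificate_ge:
  fixes B pf :: "('h \<Rightarrow> real) \<Rightarrow> real"
  assumes "sos (\<lambda>b. B b + pf b * (b hstar - lam) - s1)" and "sos pf" and "b hstar < lam"
  shows "s1 \<le> B b"
proof -
  have "0 \<le> B b + pf b * (b hstar - lam) - s1"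
    using sos_nonneg[OF assms(1)] by simp
  moreover have "pf b * (b hstar - lam) \<le> 0"
    using sos_nonneg[OF assms(2)] assms(3) by (simp add: mult_nonneg_nonpos)
  ultimately show ?thesis by linarith
qed

definition sos_decrease_certificate ::
    "('h::finite \<Rightarrow> 'z \<Rightarrow> 'h \<Rightarrow> real) \<Rightarrow> ('y \<Rightarrow> 'h \<Rightarrow> 'z \<Rightarrow> real) \<Rightarrow> 'z \<Rightarrow> nat
      \<Rightarrow> (real \<Rightarrow> ('h \<Rightarrow> real) \<Rightarrow> real) \<Rightarrow> 'y \<Rightarrow> bool" where
  "sos_decrease_certificate T Ob z d B y \<longleftrightarrow>
    (\<exists>q. sos q \<and>
      (\<forall>x. Rupd T Ob z (\<lambda>h. x (Some h)) y \<noteq> 0 \<longrightarrow>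
         q x = - ((Rupd T Ob z (\<lambda>h. x (Some h)) y) ^ d *
               (B (x None) (fupd T Ob z (\<lambda>h. x (Some h)) y)
                - B (x None - 1) (\<lambda>h. x (Some h))))))"

lemma barrier_update_le:
  fixes B :: "real \<Rightarrow> ('h::finite \<Rightarrow> real) \<Rightarrow> real"
  assumes decrease: "sos_decrease_certificate T Ob z d B y"
    and R_pos: "0 < Rupd T Ob z b y"
  shows "B t (fupd T Ob z b y) \<le> B (t - 1) b"
proof -
  obtain q where "sos q" and q: "\<forall>x. Rupd T Ob z (\<lambda>h. x (Some h)) y \<noteq> 0 \<longrightarrow>
             q x = - ((Rupd T Ob z (\<lambda>h. x (Some h)) y) ^ d *
                   (B (x None) (fupd T Ob z (\<lambda>h. x (Some h)) y)
                    - B (x None - 1) (\<lambda>h. x (Some h))))"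
    using decrease unfolding sos_decrease_certificate_def by blast
  define x where "x = case_option t b"
  have "0 \<le> q x"
    using \<open>sos q\<close> by (rule sos_nonneg)
  also have "q x = - ((Rupd T Ob z b y) ^ d * (B t (fupd T Ob z b y) - B (t - 1) b))"
    using q R_pos by (simp add: x_def)
  finally have "(Rupd T Ob z b y) ^ d * (B t (fupd T Ob z b y) - B (t - 1) b) \<le> 0"
    by simp
  with zero_less_power[OF R_pos, of d] show ?thesis
    by (simp add: mult_le_0_iff)
qed

lemma trajectory_nonneg:
  fixes bs :: "nat \<Rightarrow> 'h::finite \<Rightarrow> real"
  assumes T_nonneg: "\<And>h h'. 0 \<le> T h z h'" and Ob_nonneg: "\<And>y h'. 0 \<le> Ob y h' z"
    and bs0: "\<And>h. 0 \<le> bs 0 h"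
    and trajectory: "\<forall>t\<in>{1..n}. bs t = fupd T Ob z (bs (t - 1)) (ys t)"
  shows "t \<le> n \<Longrightarrow> 0 \<le> bs t h"
proof (induction t arbitrary: h)
  case 0
  show ?case by (rule bs0)
next
  case (Suc t)
  then have "bs (Suc t) = fupd T Ob z (bs t) (ys (Suc t))"
    using trajectory by auto
  then show ?case
    using fupd_nonneg[of T z Ob] T_nonneg Ob_nonneg Suc by simp
qed

lemma barrier_along_trajectory:
  fixes B :: "real \<Rightarrow> ('h::finite \<Rightarrow> real) \<Rightarrow> real"
  assumes T_nonneg: "\<And>h h'. 0 \<le> T h z h'" and Ob_nonneg: "\<And>y h'. 0 \<le> Ob y h' z"
    and bs0: "\<And>h. 0 \<le> bs 0 h"
    and trajectory: "\<forall>t\<in>{1..n}. bs t = fupd T Ob z (bs (t - 1)) (ys t)"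
    and decrease: "\<forall>t\<in>{1..n}. \<forall>y. sos_decrease_certificate T Ob z d B y"
  shows "t \<le> n \<Longrightarrow> bs t = (\<lambda>_. 0) \<or> B (real t) (bs t) \<le> B 0 (bs 0)"
proof (induction t)
  case 0
  show ?case by simp
next
  case (Suc t)
  define b y where "b = bs t" and "y = ys (Suc t)"
  have step: "bs (Suc t) = fupd T Ob z b y"
    using trajectory Suc.prems by (auto simp: b_def y_def)
  have "0 \<le> b h" for h
    unfolding b_def using trajectory_nonneg[OF T_nonneg Ob_nonneg bs0 trajectory] Suc.prems
    by simp
  then have R_nonneg: "0 \<le> Rupd T Ob z b y"
    using Rupd_nonneg[of T z Ob] T_nonneg Ob_nonneg by blast
  show ?case
  proof (cases "Rupd T Ob z b y = 0")
    case True
    then show ?thesis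
      using step by (simp add: fupd_eq_zero_if_Rupd_zero)
  next
    case False
    then have R_pos: "0 < Rupd T Ob z b y"
      using R_nonneg by linarith
    then have "b \<noteq> (\<lambda>_. 0)"
      by (auto simp: Rupd_zero_belief)
    then have "B (real t) b \<le> B 0 (bs 0)"
      using Suc by (simp add: b_def)
    moreover have "B (real (Suc t)) (fupd T Ob z b y) \<le> B (real (Suc t) - 1) b"
      using decrease[rule_format, of "Suc t" y] Suc.prems
      by (intro barrier_update_le[OF _ R_pos]) simp
    ultimately show ?thesis
      using step by simp
  qed
qed

theorem corollary2:
  fixes T :: "'h::finite \<Rightarrow> 'z::finite \<Rightarrow> 'h \<Rightarrow> real"
    and Ob :: "'y::finite \<Rightarrow> 'h \<Rightarrow> 'z \<Rightarrow> real"
    and p0 :: "'h \<Rightarrow> real" and hstar :: 'h and lam :: real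
    and tstar :: nat and d :: nat
    and B :: "'z \<Rightarrow> real \<Rightarrow> ('h \<Rightarrow> real) \<Rightarrow> real"
    and pf :: "'z \<Rightarrow> ('h \<Rightarrow> real) \<Rightarrow> real"
    and s1 s2 :: "'z \<Rightarrow> real"
  assumes p0: "p0 \<in> simplex"
    and T_range: "\<forall>h z h'. 0 \<le> T h z h' \<and> T h z h' \<le> 1"
    and O_range: "\<forall>y h' z. 0 \<le> Ob y h' z \<and> Ob y h' z \<le> 1"
    and lam: "0 < lam" "lam \<le> 1"
    and tstar: "1 \<le> tstar"
    and B_poly: "\<forall>z. is_mpoly (tb_fun (B z)) \<and> mpoly_degree (tb_fun (B z)) = d"
    and pf_sos: "\<forall>z. sos (pf z)"
    and s_pos: "\<forall>z. 0 < s1 z \<and> 0 < s2 z"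
    and cond_i: "\<forall>z. sos (\<lambda>b. B z (real tstar) b + pf z b * (b hstar - lam) - s1 z)"
    and cond_ii: "\<forall>z. - B z 0 p0 - s2 z > 0"
    and cond_iii: "\<forall>z. \<forall>t\<in>{1..tstar}. \<forall>y.
        \<exists>q. sos q \<and>
          (\<forall>x. Rupd T Ob z (\<lambda>h. x (Some h)) y \<noteq> 0 \<longrightarrow>
             q x = - ((Rupd T Ob z (\<lambda>h. x (Some h)) y) ^ d *
                   (B z (x None) (fupd T Ob z (\<lambda>h. x (Some h)) y)
                    - B z (x None - 1) (\<lambda>h. x (Some h)))))"
  shows "\<forall>z. \<not> (\<exists>bs ys. bs 0 = p0 \<and>
            (\<forall>t\<in>{1..tstar}. bs t = fupd T Ob z (bs (t - 1)) (ys t)) \<and>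
            bs tstar \<in> Bf hstar lam)"
proof (intro allI notI)
  fix z
  assume "\<exists>bs ys. bs 0 = p0 \<and>
            (\<forall>t\<in>{1..tstar}. bs t = fupd T Ob z (bs (t - 1)) (ys t)) \<and>
            bs tstar \<in> Bf hstar lam"
  then obtain bs ys where bs0: "bs 0 = p0"
    and trajectory: "\<forall>t\<in>{1..tstar}. bs t = fupd T Ob z (bs (t - 1)) (ys t)"
    and final: "bs tstar \<in> simplex" "bs tstar hstar < lam"
    by (auto simp: Bf_def)
  have "bs tstar \<noteq> (\<lambda>_. 0)"
    using final(1) zero_notin_simplex by metis
  moreover have "bs tstar = (\<lambda>_. 0) \<or> B z (real tstar) (bs tstar) \<le> B z 0 (bs 0)"
    using T_range O_range p0 bs0 cond_iii
    by (intro barrier_along_trajectory[where d = d, OF _ _ _ trajectory])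
      (auto simp: simplex_def sos_decrease_certificate_def)
  ultimately have "B z (real tstar) (bs tstar) \<le> B z 0 p0"
    using bs0 by simp
  moreover have "s1 z \<le> B z (real tstar) (bs tstar)"
    using cond_i pf_sos final(2) by (intro sos_certificate_ge[where pf = "pf z"]) auto
  ultimately show False
    using cond_ii[rule_format, of z] s_pos[rule_format, of z] by linarith
qed

end
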